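(* Let $T$ be a minimal rotation on a locally connected compact metrizable group $X$ and let $f\colon X\to G$ be a continuous topologically recurrent cocycle for $T$ with values in a nilpotent locally compact second countable group $G$. Let $H$ be a closed subgroup of $G$ and $y\mapsto H_y$ a consistent selection of subgroups in the essential ranges of $f$ satisfying $E_y(f)\subseteq N(H_y)$ for every $y\in X$, and suppose there exists $x\in X$ with $E_x(f)=H_x$. Let $z\in X$ and $g\in N(H_z)\setminus H_z$. Then there is a neighbourhood $U$ of $\mathbf 1_G$ such that for all integers $n$, \[f(n,z)\,gH_z\,f(n,z)^{-1}\cap U=\varnothing.\]
   Context: The cocycle is $f(n,x)=f(T^{n-1}x)\cdots f(x)$ for $n\ge1$, $f(0,x)=\mathbf 1_G$, $f(n,x)=f(-n,T^nx)^{-1}$ for $n<0$. $f$ is topologically recurrent if for every open neighbourhood $U$ of $\mathbf 1_G$ and nonempty open $\mathcal O\subseteq X$ there is $n\neq0$ with $T^{-n}\mathcal O\cap\mathcal O\cap\{y:f(n,y)\in U\}\neq\varnothing$; $E_x(f)$ is the set of $g$ such that this holds for every open neighbourhood $U$ of $g$ and every open neighbourhood $\mathcal O$ of $x$. For a subgroup $L$, $N(L)=\{g\in G:gLg^{-1}=L\}$. $H^G=\{gHg^{-1}:g\in G\}$, topologised via the bijection with $G/N(H)$. A consistent selection is a continuous map $y\mapsto H_y$, $X\to H^G$, with $H_x\subseteq E_x(f)$ and $H_{T^nx}=f(n,x)H_xf(n,x)^{-1}$ for all $x,n$. *)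

theory Defs
  imports "HOL-Analysis.Analysis"
begin

text \<open>Groups are written additively via the (not necessarily commutative) type class
  topological_group_add: the group operation is +, the identity is 0, the inverse is uminus.\<close>

definition subgrp :: "'g::group_add set \<Rightarrow> bool" where
  "subgrp K \<longleftrightarrow> 0 \<in> K \<and> (\<forall>a\<in>K. \<forall>b\<in>K. a + b \<in> K) \<and> (\<forall>a\<in>K. - a \<in> K)"

definition gen_subgrp :: "'g::group_add set \<Rightarrow> 'g set" where
  "gen_subgrp S = \<Inter> {K. subgrp K \<and> S \<subseteq> K}"

definition commutator :: "'g::group_add \<Rightarrow> 'g \<Rightarrow> 'g" where
  "commutator a b = a + b + - a + - b"

fun lower_central :: "nat \<Rightarrow> 'g::group_add set" where
  "lower_central 0 = UNIV"
| "lower_central (Suc n) = gen_subgrp {commutator a b | a b. b \<in> lower_central n}"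

definition nilpotent_grp :: "'g::group_add itself \<Rightarrow> bool" where
  "nilpotent_grp _ \<longleftrightarrow> (\<exists>n. lower_central n = ({0} :: 'g set))"

definition conj_set :: "'g::group_add \<Rightarrow> 'g set \<Rightarrow> 'g set" where
  "conj_set g L = (\<lambda>h. g + h + - g) ` L"

definition normaliser :: "'g::group_add set \<Rightarrow> 'g set" where
  "normaliser L = {g. conj_set g L = L}"

definition conj_class :: "'g::group_add set \<Rightarrow> 'g set set" where
  "conj_class H = {conj_set g H | g. True}"

text \<open>Topology on H^G transported from G/N(H) via the bijection g N(H) \<mapsto> g H g^{-1}:
  a set V of conjugates is open iff its preimage under g \<mapsto> g H g^{-1} is open in G
  (this is exactly the quotient topology of G/N(H)).\<close>
definition conj_class_open :: "'g::topological_group_add set \<Rightarrow> 'g set set \<Rightarrow> bool" where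
  "conj_class_open H V \<longleftrightarrow> V \<subseteq> conj_class H \<and> open {g. conj_set g H \<in> V}"

definition Tpow :: "('x \<Rightarrow> 'x) \<Rightarrow> int \<Rightarrow> 'x \<Rightarrow> 'x" where
  "Tpow T n = (if 0 \<le> n then T ^^ nat n else (inv T) ^^ nat (- n))"

definition rotation :: "('x::group_add \<Rightarrow> 'x) \<Rightarrow> bool" where
  "rotation T \<longleftrightarrow> (\<exists>a. T = (\<lambda>x. a + x))"

definition minimal_map :: "('x::topological_space \<Rightarrow> 'x) \<Rightarrow> bool" where
  "minimal_map T \<longleftrightarrow> (\<forall>x. closure {Tpow T n x | n. True} = UNIV)"

definition minimal_rotation :: "('x::topological_group_add \<Rightarrow> 'x) \<Rightarrow> bool" where
  "minimal_rotation T \<longleftrightarrow> rotation T \<and> minimal_map T"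

fun cocycle_nat :: "('x \<Rightarrow> 'x) \<Rightarrow> ('x \<Rightarrow> 'g::group_add) \<Rightarrow> nat \<Rightarrow> 'x \<Rightarrow> 'g" where
  "cocycle_nat T f 0 x = 0"
| "cocycle_nat T f (Suc n) x = f ((T ^^ n) x) + cocycle_nat T f n x"

definition cocycle :: "('x \<Rightarrow> 'x) \<Rightarrow> ('x \<Rightarrow> 'g::group_add) \<Rightarrow> int \<Rightarrow> 'x \<Rightarrow> 'g" where
  "cocycle T f n x = (if 0 \<le> n then cocycle_nat T f (nat n) x
                      else - cocycle_nat T f (nat (- n)) (Tpow T n x))"

definition top_recurrent ::
  "('x::topological_space \<Rightarrow> 'x) \<Rightarrow> ('x \<Rightarrow> 'g::{topological_space, group_add}) \<Rightarrow> bool" where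
  "top_recurrent T f \<longleftrightarrow>
     (\<forall>U W. open U \<and> 0 \<in> U \<and> open W \<and> W \<noteq> {} \<longrightarrow>
        (\<exists>n::int. n \<noteq> 0 \<and> (\<exists>y. Tpow T n y \<in> W \<and> y \<in> W \<and> cocycle T f n y \<in> U)))"

definition ess_range ::
  "('x::topological_space \<Rightarrow> 'x) \<Rightarrow> ('x \<Rightarrow> 'g::{topological_space, group_add}) \<Rightarrow> 'x \<Rightarrow> 'g set" where
  "ess_range T f x = {g. \<forall>U W. open U \<and> g \<in> U \<and> open W \<and> x \<in> W \<longrightarrow>
        (\<exists>n::int. n \<noteq> 0 \<and> (\<exists>y. Tpow T n y \<in> W \<and> y \<in> W \<and> cocycle T f n y \<in> U))}"

definition consistent_selection ::
  "('x::topological_space \<Rightarrow> 'x) \<Rightarrow> ('x \<Rightarrow> 'g::topological_group_add) \<Rightarrow> 'g set \<Rightarrow> ('x \<Rightarrow> 'g set) \<Rightarrow> bool" where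
  "consistent_selection T f H Hs \<longleftrightarrow>
     (\<forall>y. Hs y \<in> conj_class H) \<and>
     (\<forall>V. conj_class_open H V \<longrightarrow> open {y. Hs y \<in> V}) \<and>
     (\<forall>y. Hs y \<subseteq> ess_range T f y) \<and>
     (\<forall>x n. Hs (Tpow T n x) = conj_set (cocycle T f n x) (Hs x))"

end

theory Submission
  imports Defs
begin

(* Write H_z = b H b^-1 and a = b^-1 g b, so that a lies in N(H) but not in H. Every set
   f(n,z) g H_z f(n,z)^-1 has the form d (v aH v^-1) d^-1 with v in N(H) and d in a compact set
   K of conjugators; K exists because X is compact, G is locally compact and y |-> H_y is
   continuous into G/N(H). As G is nilpotent, N(H) is exhausted by the relative upper central
   series H = B_0 <= B_1 <= ... of closed subgroups, and induction along it shows that 0 lies in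
   the closure of the N(H)-conjugates of the coset aH only if a is in H. Hence that closure misses
   0, and the tube lemma over K gives U. *)

(* Keep group terms in the form a + - b used by Defs, so that add.assoc normalises them. *)
declare add_uminus_conv_diff [simp del] diff_conv_add_uminus [simp] minus_add [simp]

lemma conj_set_add: "conj_set a (conj_set b L) = conj_set (a + b) (L::'g::group_add set)"
  unfolding conj_set_def image_image by (simp add: add.assoc)

lemma conj_set_zero [simp]: "conj_set 0 (L::'g::group_add set) = L"
  unfolding conj_set_def by simp

lemma mem_conj_set_iff: "x \<in> conj_set b L \<longleftrightarrow> - b + x + b \<in> (L::'g::group_add set)"
proof
  assume "x \<in> conj_set b L"
  then show "- b + x + b \<in> L" unfolding conj_set_def by (auto simp: add.assoc)
next
  assume "- b + x + b \<in> L"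
  moreover have "x = b + (- b + x + b) + - b" by (simp add: add.assoc)
  ultimately show "x \<in> conj_set b L" unfolding conj_set_def by blast
qed

lemma commutator_add_left:
  "commutator (q1 + q2) p = q1 + commutator q2 p + - q1 + commutator q1 (p::'g::group_add)"
  by (simp add: commutator_def add.assoc)

lemma commutator_minus_left: "commutator (- q) p = - q + - commutator q p + (q::'g::group_add)"
  by (simp add: commutator_def add.assoc)

lemma commutator_conj_left:
  "commutator (v + q + - v) p = v + commutator q (- v + p + v) + - (v::'g::group_add)"
  by (simp add: commutator_def add.assoc)

lemma commutator_swap: "commutator q p = - commutator p (q::'g::group_add)"
  by (simp add: commutator_def add.assoc)

lemma mem_normaliser_iff:
  "g \<in> normaliser L \<longleftrightarrow>
    (\<forall>h\<in>L. g + h + - g \<in> L) \<and> (\<forall>h\<in>L. - g + h + g \<in> (L::'g::group_add set))"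
proof
  assume "g \<in> normaliser L"
  then have "conj_set g L = L" by (simp add: normaliser_def)
  then show "(\<forall>h\<in>L. g + h + - g \<in> L) \<and> (\<forall>h\<in>L. - g + h + g \<in> L)"
    using mem_conj_set_iff[of _ g L] unfolding conj_set_def by blast
next
  assume "(\<forall>h\<in>L. g + h + - g \<in> L) \<and> (\<forall>h\<in>L. - g + h + g \<in> L)"
  then have "conj_set g L = L"
    using mem_conj_set_iff[of _ g L] unfolding conj_set_def by blast
  then show "g \<in> normaliser L" by (simp add: normaliser_def)
qed

lemma normaliser_conj_mem:
  "v \<in> normaliser L \<Longrightarrow> h \<in> L \<Longrightarrow> v + h + - v \<in> (L::'g::group_add set)"
  by (simp add: mem_normaliser_iff)

lemma zero_in_normaliser: "0 \<in> normaliser (L::'g::group_add set)"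
  by (simp add: normaliser_def)

lemma normaliser_add:
  "a \<in> normaliser L \<Longrightarrow> b \<in> normaliser L \<Longrightarrow> a + b \<in> normaliser (L::'g::group_add set)"
  by (simp add: normaliser_def conj_set_add[symmetric])

lemma normaliser_minus:
  assumes "a \<in> normaliser (L::'g::group_add set)"
  shows "- a \<in> normaliser L"
proof -
  have "conj_set (- a) L = conj_set (- a) (conj_set a L)"
    using assms by (simp add: normaliser_def)
  then show ?thesis by (simp add: conj_set_add normaliser_def)
qed

lemma normaliser_conj:
  "v \<in> normaliser L \<Longrightarrow> q \<in> normaliser L \<Longrightarrow> v + q + - v \<in> normaliser (L::'g::group_add set)"
  by (intro normaliser_add normaliser_minus)

lemma subgrp_subset_normaliser: "subgrp H \<Longrightarrow> H \<subseteq> normaliser (H::'g::group_add set)"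
  unfolding subgrp_def by (auto simp: mem_normaliser_iff)

lemma closed_normaliser:
  assumes "closed (H::'g::topological_group_add set)"
  shows "closed (normaliser H)"
proof -
  have eq: "normaliser H = (\<Inter>h\<in>H. (\<lambda>g. g + h + - g) -` H \<inter> (\<lambda>g. - g + h + g) -` H)"
    by (auto simp: mem_normaliser_iff)
  show ?thesis unfolding eq
    by (intro closed_INT ballI closed_Int continuous_closed_vimage assms continuous_intros)
qed

lemma conj_set_eq_iff:
  "conj_set g H = conj_set e H \<longleftrightarrow> - e + g \<in> normaliser (H::'g::group_add set)"
proof
  assume "conj_set g H = conj_set e H"
  then have "conj_set (- e) (conj_set g H) = H" by (simp add: conj_set_add)
  then show "- e + g \<in> normaliser H" by (simp add: conj_set_add normaliser_def)
next
  assume "- e + g \<in> normaliser H"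
  then have "conj_set e (conj_set (- e + g) H) = conj_set e H" by (simp add: normaliser_def)
  then show "conj_set g H = conj_set e H" by (simp add: conj_set_add add.assoc[symmetric])
qed

lemma normaliser_conj_set:
  "g \<in> normaliser (conj_set b H) \<longleftrightarrow> - b + g + b \<in> normaliser (H::'g::group_add set)"
proof -
  have "g \<in> normaliser (conj_set b H) \<longleftrightarrow> conj_set (g + b) H = conj_set b H"
    by (simp add: normaliser_def conj_set_add)
  also have "\<dots> \<longleftrightarrow> - b + g + b \<in> normaliser H"
    by (simp add: conj_set_eq_iff add.assoc)
  finally show ?thesis .
qed

(* The preimage in N(H) of the j-th centre of N(H)/H. *)
fun rel_upper_central :: "'g::group_add set \<Rightarrow> nat \<Rightarrow> 'g set" where
  "rel_upper_central H 0 = H"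
| "rel_upper_central H (Suc j) =
     {q \<in> normaliser H. \<forall>p\<in>normaliser H. commutator q p \<in> rel_upper_central H j}"

lemma subset_rel_upper_central:
  assumes "subgrp H"
  shows "H \<subseteq> rel_upper_central H j"
proof (induction j)
  case 0
  show ?case by simp
next
  case (Suc j)
  have "commutator q p \<in> H" if "q \<in> H" "p \<in> normaliser H" for q p
  proof -
    have "p + - q + - p \<in> H" using that assms by (simp add: mem_normaliser_iff subgrp_def)
    then have "q + (p + - q + - p) \<in> H" using that assms by (simp add: subgrp_def)
    then show ?thesis by (simp add: commutator_def add.assoc)
  qed
  then show ?case using Suc.IH subgrp_subset_normaliser[OF assms] by auto
qed

lemma rel_upper_central_conj:
  "v \<in> normaliser H \<Longrightarrow> q \<in> rel_upper_central H j \<Longrightarrow> v + q + - v \<in> rel_upper_central H j"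
proof (induction j arbitrary: v q)
  case 0
  then show ?case by (simp add: normaliser_conj_mem)
next
  case (Suc j)
  have "commutator (v + q + - v) p \<in> rel_upper_central H j" if "p \<in> normaliser H" for p
  proof -
    have "- v + p + v \<in> normaliser H"
      using normaliser_conj[OF normaliser_minus[OF Suc.prems(1)] that] by simp
    then have "commutator q (- v + p + v) \<in> rel_upper_central H j" using Suc.prems(2) by simp
    then show ?thesis unfolding commutator_conj_left using Suc.IH Suc.prems(1) by blast
  qed
  then show ?case using Suc.prems by (auto intro: normaliser_conj)
qed

lemma subgrp_rel_upper_central:
  assumes "subgrp H"
  shows "subgrp (rel_upper_central H j)"
proof (induction j)
  case 0
  then show ?case using assms by simp
next
  case (Suc j)
  let ?B = "rel_upper_central H j"
  have add: "a + b \<in> ?B" and minus: "- a \<in> ?B" if "a \<in> ?B" "b \<in> ?B" for a b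
    using Suc.IH that unfolding subgrp_def by auto
  have "0 \<in> rel_upper_central H (Suc j)"
    using Suc.IH by (simp add: subgrp_def commutator_def zero_in_normaliser)
  moreover have "a + b \<in> rel_upper_central H (Suc j)"
    if "a \<in> rel_upper_central H (Suc j)" "b \<in> rel_upper_central H (Suc j)" for a b
    using that by (auto simp only: commutator_add_left rel_upper_central.simps mem_Collect_eq
        intro!: add rel_upper_central_conj normaliser_add)
  moreover have "- a \<in> rel_upper_central H (Suc j)"
    if a: "a \<in> rel_upper_central H (Suc j)" for a
  proof -
    have "commutator (- a) p \<in> ?B" if "p \<in> normaliser H" for p
    proof -
      have "- a + - commutator a p + - (- a) \<in> ?B"
        by (intro rel_upper_central_conj normaliser_minus minus) (use a that in auto)
      then show ?thesis by (simp add: commutator_minus_left)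
    qed
    then show ?thesis using a normaliser_minus by auto
  qed
  ultimately show ?case unfolding subgrp_def by blast
qed

lemma closed_rel_upper_central:
  assumes "closed (H::'g::topological_group_add set)"
  shows "closed (rel_upper_central H j)"
proof (induction j)
  case 0
  then show ?case using assms by simp
next
  case (Suc j)
  have eq: "rel_upper_central H (Suc j) =
      normaliser H \<inter> (\<Inter>p\<in>normaliser H. (\<lambda>q. commutator q p) -` rel_upper_central H j)"
    by auto
  show ?case unfolding eq commutator_def
    by (intro closed_INT ballI closed_Int continuous_closed_vimage closed_normaliser assms Suc
        continuous_intros)
qed

lemma commutator_mem_lower_central:
  "q \<in> lower_central k \<Longrightarrow> commutator p q \<in> lower_central (Suc k)"
  by (auto simp: gen_subgrp_def)

lemma normaliser_commutator:
  "p \<in> normaliser L \<Longrightarrow> q \<in> normaliser L \<Longrightarrow>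
    commutator p q \<in> normaliser (L::'g::group_add set)"
  unfolding commutator_def by (intro normaliser_add normaliser_minus)

lemma lower_central_normaliser_subset_rel_upper_central:
  fixes H :: "'g::group_add set"
  assumes "subgrp H" and "lower_central (k + j) = ({0} :: 'g set)"
  shows "lower_central k \<inter> normaliser H \<subseteq> rel_upper_central H j"
  using assms(2)
proof (induction j arbitrary: k)
  case 0
  then show ?case using assms(1) by (auto simp: subgrp_def)
next
  case (Suc j)
  have "commutator q p \<in> rel_upper_central H j"
    if "q \<in> lower_central k" "q \<in> normaliser H" "p \<in> normaliser H" for p q
  proof -
    have "commutator p q \<in> lower_central (Suc k) \<inter> normaliser H"
      using that by (blast intro: commutator_mem_lower_central normaliser_commutator)
    moreover have "lower_central (Suc k + j) = ({0} :: 'g set)" using Suc.prems by simp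
    ultimately have "commutator p q \<in> rel_upper_central H j" using Suc.IH by blast
    then show ?thesis
      using subgrp_rel_upper_central[OF assms(1)] by (simp add: commutator_swap[of q] subgrp_def)
  qed
  then show ?case by auto
qed

lemma nilpotent_normaliser_subset_rel_upper_central:
  assumes "subgrp (H::'g::group_add set)" and "nilpotent_grp TYPE('g)"
  shows "\<exists>c. normaliser H \<subseteq> rel_upper_central H c"
proof -
  obtain c where "lower_central (0 + c) = ({0}::'g set)"
    using assms(2) unfolding nilpotent_grp_def by auto
  from lower_central_normaliser_subset_rel_upper_central[OF assms(1) this] show ?thesis by auto
qed

definition coset_conjugates :: "'g::group_add set \<Rightarrow> 'g \<Rightarrow> 'g set" where
  "coset_conjugates H a = (\<Union>v\<in>normaliser H. conj_set v ((\<lambda>h. a + h) ` H))"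

lemma mem_coset_conjugates:
  "s \<in> coset_conjugates H a \<longleftrightarrow> (\<exists>v\<in>normaliser H. \<exists>h\<in>H. s = v + a + h + - v)"
  unfolding coset_conjugates_def conj_set_def image_image by (simp add: add.assoc) blast

lemma rel_upper_central_closure_coset_conjugates:
  fixes H :: "'g::topological_group_add set"
  assumes H: "subgrp H" "closed H"
  shows "a \<in> rel_upper_central H j \<Longrightarrow> 0 \<in> closure (coset_conjugates H a) \<Longrightarrow> a \<in> H"
proof (induction j arbitrary: a)
  case 0
  then show ?case by simp
next
  case (Suc j)
  let ?B = "rel_upper_central H j"
  have B: "subgrp ?B" by (rule subgrp_rel_upper_central[OF H(1)])
  have aN: "a \<in> normaliser H"
    and comm: "\<And>v. v \<in> normaliser H \<Longrightarrow> commutator a v \<in> ?B"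
    using Suc.prems(1) by auto
  have "coset_conjugates H a \<subseteq> (\<lambda>s. s + - a) -` ?B"
  proof
    fix s assume "s \<in> coset_conjugates H a"
    then obtain v h where v: "v \<in> normaliser H" and h: "h \<in> H" and s: "s = v + a + h + - v"
      by (auto simp: mem_coset_conjugates)
    have "- commutator a v \<in> ?B"
      using comm[OF v] B by (simp add: subgrp_def)
    moreover have "v + h + - v \<in> ?B"
      using normaliser_conj_mem[OF v h] subset_rel_upper_central[OF H(1)] by blast
    then have "a + (v + h + - v) + - a \<in> ?B"
      using aN by (rule rel_upper_central_conj[rotated])
    ultimately have "- commutator a v + (a + (v + h + - v) + - a) \<in> ?B"
      using B by (simp add: subgrp_def)
    then show "s \<in> (\<lambda>s. s + - a) -` ?B"
      by (simp add: s commutator_def add.assoc)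
  qed
  moreover have "closed ((\<lambda>s. s + - a) -` ?B)"
    by (intro continuous_closed_vimage closed_rel_upper_central H continuous_intros)
  ultimately have "closure (coset_conjugates H a) \<subseteq> (\<lambda>s. s + - a) -` ?B"
    by (rule closure_minimal)
  then have "- a \<in> ?B" using Suc.prems(2) by auto
  then have "a \<in> ?B" using B unfolding subgrp_def by (metis minus_minus)
  then show ?case using Suc.IH Suc.prems(2) by blast
qed

lemma zero_notin_closure_coset_conjugates:
  fixes H :: "'g::topological_group_add set"
  assumes "subgrp H" "closed H" "nilpotent_grp TYPE('g)" "a \<in> normaliser H" "a \<notin> H"
  shows "0 \<notin> closure (coset_conjugates H a)"
  using assms nilpotent_normaliser_subset_rel_upper_central
    rel_upper_central_closure_coset_conjugates by blast

lemma conj_class_open_conj_image: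
  fixes H :: "'g::topological_group_add set"
  assumes "open S"
  shows "conj_class_open H ((\<lambda>e. conj_set e H) ` S)"
proof -
  have eq: "{g. conj_set g H \<in> (\<lambda>e. conj_set e H) ` S} =
      (\<Union>v\<in>normaliser H. (\<lambda>g. g + - v) -` S)"
  proof (intro set_eqI iffI)
    fix g assume "g \<in> {g. conj_set g H \<in> (\<lambda>e. conj_set e H) ` S}"
    then obtain e where "e \<in> S" "- e + g \<in> normaliser H"
      by (auto simp: conj_set_eq_iff)
    then show "g \<in> (\<Union>v\<in>normaliser H. (\<lambda>g. g + - v) -` S)"
      by (intro UN_I[of "- e + g"]) (simp_all add: add.assoc)
  next
    fix g assume "g \<in> (\<Union>v\<in>normaliser H. (\<lambda>g. g + - v) -` S)"
    then obtain v where "v \<in> normaliser H" "g + - v \<in> S" by auto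
    moreover from this(1) have "conj_set g H = conj_set (g + - v) H"
      by (simp add: conj_set_eq_iff add.assoc)
    ultimately show "g \<in> {g. conj_set g H \<in> (\<lambda>e. conj_set e H) ` S}"
      by (intro CollectI image_eqI[of _ _ "g + - v"])
  qed
  have "open (\<Union>v\<in>normaliser H. (\<lambda>g. g + - v) -` S)"
    using assms by (intro open_UN ballI continuous_open_vimage continuous_intros)
  then show ?thesis
    unfolding conj_class_open_def conj_class_def eq by blast
qed

lemma compact_conjugators:
  fixes Hs :: "'x::topological_space \<Rightarrow> 'g::topological_group_add set"
  assumes "compact (UNIV :: 'x set)" and "locally compact (UNIV :: 'g set)"
    and cls: "\<And>y. Hs y \<in> conj_class H"
    and cont: "\<And>V. conj_class_open H V \<Longrightarrow> open {y. Hs y \<in> V}"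
  shows "\<exists>K. compact K \<and> (\<forall>y. \<exists>d\<in>K. Hs y = conj_set d H)"
proof -
  have "\<exists>W C. open W \<and> compact C \<and> e \<in> W \<and> W \<subseteq> C" for e :: 'g
  proof -
    obtain W C where "openin (top_of_set UNIV) W" "compact C" "e \<in> W" "W \<subseteq> C"
      using locallyE[OF assms(2), of UNIV e] by auto
    then show ?thesis by auto
  qed
  then obtain W C
    where WC: "\<And>e::'g. open (W e) \<and> compact (C e) \<and> e \<in> W e \<and> W e \<subseteq> C e"
    by metis
  let ?V = "\<lambda>e. {y. Hs y \<in> (\<lambda>e'. conj_set e' H) ` W e}"
  have V_open: "open (?V e)" for e
    using WC by (intro cont conj_class_open_conj_image) blast
  have V_cover: "UNIV \<subseteq> (\<Union>e. ?V e)"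
  proof
    fix y
    obtain e where "Hs y = conj_set e H" using cls[of y] unfolding conj_class_def by blast
    then have "y \<in> ?V e" using WC[of e] by blast
    then show "y \<in> (\<Union>e. ?V e)" by blast
  qed
  obtain D where D: "finite D" "UNIV \<subseteq> (\<Union>e\<in>D. ?V e)"
    by (rule compactE_image[OF assms(1) V_open V_cover])
  have "\<exists>d\<in>(\<Union>e\<in>D. C e). Hs y = conj_set d H" for y
  proof -
    obtain e where "e \<in> D" "y \<in> ?V e" using D(2) by blast
    then show ?thesis using WC[of e] by blast
  qed
  moreover have "compact (\<Union>e\<in>D. C e)" using D(1) WC by blast
  ultimately show ?thesis by blast
qed

lemma nhds_disjoint_conj_compact:
  fixes K C :: "'g::topological_group_add set"
  assumes "compact K" and "closed C" and "0 \<notin> C"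
  shows "\<exists>U. open U \<and> 0 \<in> U \<and> (\<forall>d\<in>K. conj_set d C \<inter> U = {})"
proof -
  let ?W = "(\<lambda>p. - snd p + fst p + snd p) -` (- C)"
  have W: "open ?W"
    by (intro continuous_open_vimage continuous_intros) (use assms(2) in auto)
  have "{0} \<times> K \<subseteq> ?W" using assms(3) by auto
  then obtain U where U: "0 \<in> U" "open U" "U \<times> K \<subseteq> ?W"
    using Elementary_Topology.tube_lemma[OF assms(1) W] by blast
  have "x \<notin> conj_set d C" if "d \<in> K" "x \<in> U" for d x
  proof -
    have "(x, d) \<in> ?W" using U(3) that by blast
    then show ?thesis by (simp add: mem_conj_set_iff)
  qed
  then show ?thesis using U by blast
qed

lemma conj_translate_subset_conj_coset_conjugates:
  assumes "conj_set c (conj_set b H) = conj_set d (H::'g::group_add set)"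
  shows "conj_set c ((\<lambda>h. g + h) ` conj_set b H) \<subseteq>
    conj_set d (coset_conjugates H (- b + g + b))"
proof
  fix e assume "e \<in> conj_set c ((\<lambda>h. g + h) ` conj_set b H)"
  then obtain h where h: "h \<in> H" and e: "e = c + (g + (b + h + - b)) + - c"
    unfolding conj_set_def by auto
  let ?v = "- d + (c + b)"
  have "?v \<in> normaliser H"
    using assms by (simp add: conj_set_add conj_set_eq_iff)
  then have "?v + (- b + g + b) + h + - ?v \<in> coset_conjugates H (- b + g + b)"
    unfolding mem_coset_conjugates using h by blast
  moreover have "e = d + (?v + (- b + g + b) + h + - ?v) + - d"
    by (simp add: e add.assoc)
  ultimately show "e \<in> conj_set d (coset_conjugates H (- b + g + b))"
    unfolding conj_set_def by blast
qed

theorem lemma4p5: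
  fixes T :: "'x::{metric_space, topological_group_add} \<Rightarrow> 'x"
    and f :: "'x \<Rightarrow> 'g::{topological_group_add, t2_space, second_countable_topology}"
    and H :: "'g set"
    and Hs :: "'x \<Rightarrow> 'g set"
    and x z :: 'x
    and g :: 'g
  assumes X_compact: "compact (UNIV :: 'x set)"
    and X_loc_conn: "locally connected (UNIV :: 'x set)"
    and G_loc_compact: "locally compact (UNIV :: 'g set)"
    and G_nilpotent: "nilpotent_grp TYPE('g)"
    and T_min: "minimal_rotation T"
    and f_cont: "continuous_on UNIV f"
    and f_rec: "top_recurrent T f"
    and H_closed: "closed H"
    and H_subgrp: "subgrp H"
    and sel: "consistent_selection T f H Hs"
    and norm: "\<And>y. ess_range T f y \<subseteq> normaliser (Hs y)"
    and x_eq: "ess_range T f x = Hs x"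
    and g_in: "g \<in> normaliser (Hs z) - Hs z"
  shows "\<exists>U. open U \<and> 0 \<in> U \<and>
           (\<forall>n::int. conj_set (cocycle T f n z) ((\<lambda>h. g + h) ` Hs z) \<inter> U = {})"
proof -
  have cls: "\<And>y. Hs y \<in> conj_class H"
    and cont: "\<And>V. conj_class_open H V \<Longrightarrow> open {y. Hs y \<in> V}"
    and equivariant: "\<And>n. Hs (Tpow T n z) = conj_set (cocycle T f n z) (Hs z)"
    using sel unfolding consistent_selection_def by auto
  obtain b where b: "Hs z = conj_set b H" using cls unfolding conj_class_def by auto
  obtain K where K: "compact K" "\<And>y. \<exists>d\<in>K. Hs y = conj_set d H"
    using compact_conjugators[OF X_compact G_loc_compact cls cont] by blast
  let ?a = "- b + g + b"
  have "?a \<in> normaliser H" "?a \<notin> H"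
    using g_in by (simp_all add: b normaliser_conj_set mem_conj_set_iff)
  then have far: "0 \<notin> closure (coset_conjugates H ?a)"
    by (intro zero_notin_closure_coset_conjugates H_subgrp H_closed G_nilpotent)
  obtain U where U: "open U" "0 \<in> U"
    and disjoint: "\<And>d. d \<in> K \<Longrightarrow> conj_set d (closure (coset_conjugates H ?a)) \<inter> U = {}"
    using nhds_disjoint_conj_compact[OF K(1) closed_closure far] by blast
  have "conj_set (cocycle T f n z) ((\<lambda>h. g + h) ` Hs z) \<inter> U = {}" for n
  proof -
    obtain d where d: "d \<in> K" "Hs (Tpow T n z) = conj_set d H" using K(2) by blast
    then have "conj_set (cocycle T f n z) (conj_set b H) = conj_set d H"
      using equivariant b by simp
    then have "conj_set (cocycle T f n z) ((\<lambda>h. g + h) ` Hs z) \<subseteq>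
        conj_set d (coset_conjugates H ?a)"
      unfolding b by (rule conj_translate_subset_conj_coset_conjugates)
    also have "\<dots> \<subseteq> conj_set d (closure (coset_conjugates H ?a))"
      unfolding conj_set_def by (intro image_mono closure_subset)
    finally show ?thesis using disjoint[OF d(1)] by blast
  qed
  then show ?thesis using U by blast
qed

end
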